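(* Let $\mathcal{C}$ be an additive category with an automorphism $\Sigma$, let $n\ge3$, and let $\mathscr{N}$ be a collection of $n$-$\Sigma$-sequences in $\mathcal{C}$ satisfying the axioms (N1* ) and (N3). Then $\mathscr{N}$ satisfies (N2) if and only if $\mathscr{N}$ satisfies (N2* ).
   Context: $\mathcal{C}$ is an additive category, $\Sigma\colon\mathcal{C}\to\mathcal{C}$ an automorphism, $n\ge3$. An $n$-$\Sigma$-sequence $A_\bullet$ is a diagram $A_1\xrightarrow{\alpha_1}A_2\to\cdots\xrightarrow{\alpha_{n-1}}A_n\xrightarrow{\alpha_n}\Sigma A_1$. It is exact if for every object $B$ the doubly infinite sequence of abelian groups $\cdots\to\mathrm{Hom}(B,\Sigma^iA_1)\xrightarrow{(\Sigma^i\alpha_1)_*}\mathrm{Hom}(B,\Sigma^iA_2)\to\cdots\xrightarrow{(\Sigma^i\alpha_n)_*}\mathrm{Hom}(B,\Sigma^{i+1}A_1)\to\cdots$ ($i\in\mathbb{Z}$) is exact. The left rotation of $A_\bullet$ is $A_2\xrightarrow{\alpha_2}\cdots\xrightarrow{\alpha_n}\Sigma A_1\xrightarrow{(-1)^n\Sigma\alpha_1}\Sigma A_2$. A morphism $(\varphi_1,\dots,\varphi_n)\colon A_\bullet\to B_\bullet$ consists of $\varphi_i\colon A_i\to B_i$ with $\varphi_{i+1}\alpha_i=\beta_i\varphi_i$ ($1\le i\le n-1$) and $\Sigma\varphi_1\circ\alpha_n=\beta_n\varphi_n$; it is a weak isomorphism if $\varphi_i$ and $\varphi_{i+1}$ are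 isomorphisms for some $1\le i\le n$ (with $\varphi_{n+1}:=\Sigma\varphi_1$). Axioms for a collection $\mathscr{N}$: (N1* ): (a) if $A_\bullet\to B_\bullet$ is a weak isomorphism of exact $n$-$\Sigma$-sequences with $A_\bullet\in\mathscr{N}$, then $B_\bullet\in\mathscr{N}$; (b) for all objects $A$, the trivial sequence $A\xrightarrow{1}A\to0\to\cdots\to0\to\Sigma A$ is in $\mathscr{N}$; (c) every morphism $\alpha\colon A_1\to A_2$ is the first morphism of some sequence in $\mathscr{N}$. (N2): an $n$-$\Sigma$-sequence is in $\mathscr{N}$ if and only if its left rotation is in $\mathscr{N}$. (N2* ): the left rotation of every sequence in $\mathscr{N}$ is in $\mathscr{N}$. (N3): given $A_\bullet,B_\bullet\in\mathscr{N}$ and $\varphi_1\colon A_1\to B_1$, $\varphi_2\colon A_2\to B_2$ with $\varphi_2\alpha_1=\beta_1\varphi_1$, there exist $\varphi_3,\dots,\varphi_n$ making $(\varphi_1,\dots,\varphi_n)$ a morphism of $n$-$\Sigma$-sequences. *)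

theory Defs
  imports Main
begin

text \<open>All operations are indexed by the objects involved, so hom-sets of different
pairs of objects need not be disjoint.  cmp A B C g f is the composite g o f of
f : A \<rightarrow> B and g : B \<rightarrow> C.\<close>

record ('o, 'm) addcat =
  hom :: "'o \<Rightarrow> 'o \<Rightarrow> 'm set"
  cmp :: "'o \<Rightarrow> 'o \<Rightarrow> 'o \<Rightarrow> 'm \<Rightarrow> 'm \<Rightarrow> 'm"
  idm :: "'o \<Rightarrow> 'm"
  pls :: "'o \<Rightarrow> 'o \<Rightarrow> 'm \<Rightarrow> 'm \<Rightarrow> 'm"
  zro :: "'o \<Rightarrow> 'o \<Rightarrow> 'm"
  ngt :: "'o \<Rightarrow> 'o \<Rightarrow> 'm \<Rightarrow> 'm"

definition is_category :: "('o, 'm) addcat \<Rightarrow> bool" where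
  "is_category C \<longleftrightarrow>
     (\<forall>A B D f g. f \<in> hom C A B \<longrightarrow> g \<in> hom C B D \<longrightarrow> cmp C A B D g f \<in> hom C A D) \<and>
     (\<forall>A B D E f g h. f \<in> hom C A B \<longrightarrow> g \<in> hom C B D \<longrightarrow> h \<in> hom C D E \<longrightarrow>
        cmp C A D E h (cmp C A B D g f) = cmp C A B E (cmp C B D E h g) f) \<and>
     (\<forall>A. idm C A \<in> hom C A A) \<and>
     (\<forall>A B f. f \<in> hom C A B \<longrightarrow> cmp C A B B (idm C B) f = f \<and> cmp C A A B f (idm C A) = f)"

definition is_preadditive :: "('o, 'm) addcat \<Rightarrow> bool" where
  "is_preadditive C \<longleftrightarrow> is_category C \<and>
     (\<forall>A B. zro C A B \<in> hom C A B) \<and>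
     (\<forall>A B f g. f \<in> hom C A B \<longrightarrow> g \<in> hom C A B \<longrightarrow> pls C A B f g \<in> hom C A B) \<and>
     (\<forall>A B f. f \<in> hom C A B \<longrightarrow> ngt C A B f \<in> hom C A B) \<and>
     (\<forall>A B f g h. f \<in> hom C A B \<longrightarrow> g \<in> hom C A B \<longrightarrow> h \<in> hom C A B \<longrightarrow>
        pls C A B (pls C A B f g) h = pls C A B f (pls C A B g h)) \<and>
     (\<forall>A B f g. f \<in> hom C A B \<longrightarrow> g \<in> hom C A B \<longrightarrow> pls C A B f g = pls C A B g f) \<and>
     (\<forall>A B f. f \<in> hom C A B \<longrightarrow> pls C A B (zro C A B) f = f) \<and>
     (\<forall>A B f. f \<in> hom C A B \<longrightarrow> pls C A B (ngt C A B f) f = zro C A B) \<and>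
     (\<forall>A B D f g g'. f \<in> hom C A B \<longrightarrow> g \<in> hom C B D \<longrightarrow> g' \<in> hom C B D \<longrightarrow>
        cmp C A B D (pls C B D g g') f = pls C A D (cmp C A B D g f) (cmp C A B D g' f)) \<and>
     (\<forall>A B D f f' g. f \<in> hom C A B \<longrightarrow> f' \<in> hom C A B \<longrightarrow> g \<in> hom C B D \<longrightarrow>
        cmp C A B D g (pls C A B f f') = pls C A D (cmp C A B D g f) (cmp C A B D g f'))"

definition is_zero_object :: "('o, 'm) addcat \<Rightarrow> 'o \<Rightarrow> bool" where
  "is_zero_object C Z \<longleftrightarrow> (\<forall>A. hom C Z A = {zro C Z A} \<and> hom C A Z = {zro C A Z})"

definition is_biproduct :: "('o, 'm) addcat \<Rightarrow> 'o \<Rightarrow> 'o \<Rightarrow> 'o \<Rightarrow> 'm \<Rightarrow> 'm \<Rightarrow> 'm \<Rightarrow> 'm \<Rightarrow> bool" where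
  "is_biproduct C A B P i1 i2 p1 p2 \<longleftrightarrow>
     i1 \<in> hom C A P \<and> i2 \<in> hom C B P \<and> p1 \<in> hom C P A \<and> p2 \<in> hom C P B \<and>
     cmp C A P A p1 i1 = idm C A \<and> cmp C B P B p2 i2 = idm C B \<and>
     pls C P P (cmp C P A P i1 p1) (cmp C P B P i2 p2) = idm C P"

definition is_additive_category :: "('o, 'm) addcat \<Rightarrow> bool" where
  "is_additive_category C \<longleftrightarrow> is_preadditive C \<and>
     (\<exists>Z. is_zero_object C Z) \<and>
     (\<forall>A B. \<exists>P i1 i2 p1 p2. is_biproduct C A B P i1 i2 p1 p2)"

definition is_iso :: "('o, 'm) addcat \<Rightarrow> 'o \<Rightarrow> 'o \<Rightarrow> 'm \<Rightarrow> bool" where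
  "is_iso C A B f \<longleftrightarrow> f \<in> hom C A B \<and>
     (\<exists>g \<in> hom C B A. cmp C A B A g f = idm C A \<and> cmp C B A B f g = idm C B)"

text \<open>An automorphism \<Sigma> is given by its object part So and morphism part Sm
(Sm A B maps hom A B to hom (So A) (So B)); it is a functor which is an isomorphism
of categories.\<close>

definition is_automorphism :: "('o, 'm) addcat \<Rightarrow> ('o \<Rightarrow> 'o) \<Rightarrow> ('o \<Rightarrow> 'o \<Rightarrow> 'm \<Rightarrow> 'm) \<Rightarrow> bool" where
  "is_automorphism C So Sm \<longleftrightarrow>
     (\<forall>A B f. f \<in> hom C A B \<longrightarrow> Sm A B f \<in> hom C (So A) (So B)) \<and>
     (\<forall>A. Sm A A (idm C A) = idm C (So A)) \<and>
     (\<forall>A B D f g. f \<in> hom C A B \<longrightarrow> g \<in> hom C B D \<longrightarrow>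
        Sm A D (cmp C A B D g f) = cmp C (So A) (So B) (So D) (Sm B D g) (Sm A B f)) \<and>
     bij So \<and>
     (\<forall>A B. bij_betw (Sm A B) (hom C A B) (hom C (So A) (So B)))"

definition Sinv_obj :: "('o \<Rightarrow> 'o) \<Rightarrow> 'o \<Rightarrow> 'o" where
  "Sinv_obj So = inv So"

definition Sinv_mor :: "('o, 'm) addcat \<Rightarrow> ('o \<Rightarrow> 'o) \<Rightarrow> ('o \<Rightarrow> 'o \<Rightarrow> 'm \<Rightarrow> 'm) \<Rightarrow> 'o \<Rightarrow> 'o \<Rightarrow> 'm \<Rightarrow> 'm" where
  "Sinv_mor C So Sm X Y g =
     inv_into (hom C (Sinv_obj So X) (Sinv_obj So Y)) (Sm (Sinv_obj So X) (Sinv_obj So Y)) g"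

definition shift_obj :: "('o \<Rightarrow> 'o) \<Rightarrow> int \<Rightarrow> 'o \<Rightarrow> 'o" where
  "shift_obj So i X = (if 0 \<le> i then (So ^^ nat i) X else (Sinv_obj So ^^ nat (- i)) X)"

fun shift_mor_pos :: "('o \<Rightarrow> 'o) \<Rightarrow> ('o \<Rightarrow> 'o \<Rightarrow> 'm \<Rightarrow> 'm) \<Rightarrow> nat \<Rightarrow> 'o \<Rightarrow> 'o \<Rightarrow> 'm \<Rightarrow> 'm" where
  "shift_mor_pos So Sm 0 X Y f = f"
| "shift_mor_pos So Sm (Suc k) X Y f = Sm ((So ^^ k) X) ((So ^^ k) Y) (shift_mor_pos So Sm k X Y f)"

fun shift_mor_neg :: "('o, 'm) addcat \<Rightarrow> ('o \<Rightarrow> 'o) \<Rightarrow> ('o \<Rightarrow> 'o \<Rightarrow> 'm \<Rightarrow> 'm) \<Rightarrow> nat \<Rightarrow> 'o \<Rightarrow> 'o \<Rightarrow> 'm \<Rightarrow> 'm" where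
  "shift_mor_neg C So Sm 0 X Y f = f"
| "shift_mor_neg C So Sm (Suc k) X Y f =
     Sinv_mor C So Sm ((Sinv_obj So ^^ k) X) ((Sinv_obj So ^^ k) Y) (shift_mor_neg C So Sm k X Y f)"

definition shift_mor :: "('o, 'm) addcat \<Rightarrow> ('o \<Rightarrow> 'o) \<Rightarrow> ('o \<Rightarrow> 'o \<Rightarrow> 'm \<Rightarrow> 'm) \<Rightarrow> int \<Rightarrow> 'o \<Rightarrow> 'o \<Rightarrow> 'm \<Rightarrow> 'm" where
  "shift_mor C So Sm i X Y f =
     (if 0 \<le> i then shift_mor_pos So Sm (nat i) X Y f else shift_mor_neg C So Sm (nat (- i)) X Y f)"

text \<open>An n-\<Sigma>-sequence A_1 \<rightarrow> ... \<rightarrow> A_n \<rightarrow> \<Sigma>A_1 is a pair (As, \<alpha>s) of lists of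
length n, 0-indexed: As!j = A_(j+1), \<alpha>s!j = \<alpha>_(j+1).  seq_tgt So As j is the
codomain of \<alpha>_(j+1).\<close>

type_synonym ('o, 'm) sigseq = "'o list \<times> 'm list"

definition seq_tgt :: "('o \<Rightarrow> 'o) \<Rightarrow> 'o list \<Rightarrow> nat \<Rightarrow> 'o" where
  "seq_tgt So As j = (if Suc j < length As then As ! Suc j else So (As ! 0))"

definition is_sigseq :: "('o, 'm) addcat \<Rightarrow> ('o \<Rightarrow> 'o) \<Rightarrow> nat \<Rightarrow> ('o, 'm) sigseq \<Rightarrow> bool" where
  "is_sigseq C So n S \<longleftrightarrow> length (fst S) = n \<and> length (snd S) = n \<and>
     (\<forall>j < n. snd S ! j \<in> hom C (fst S ! j) (seq_tgt So (fst S) j))"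

text \<open>Exactness of Hom(B,W) \<rightarrow> Hom(B,X) \<rightarrow> Hom(B,Y) at Hom(B,X), for u : W \<rightarrow> X, v : X \<rightarrow> Y.\<close>

definition hom_exact_at :: "('o, 'm) addcat \<Rightarrow> 'o \<Rightarrow> 'o \<Rightarrow> 'o \<Rightarrow> 'o \<Rightarrow> 'm \<Rightarrow> 'm \<Rightarrow> bool" where
  "hom_exact_at C B W X Y u v \<longleftrightarrow>
     {h \<in> hom C B X. cmp C B X Y v h = zro C B Y} = cmp C B W X u ` hom C B W"

text \<open>Position p \<in> \<int> of the doubly infinite sequence: p = i*n + j (0 \<le> j < n)
corresponds to the term Hom(B, \<Sigma>^i A_(j+1)), and the outgoing map is (\<Sigma>^i \<alpha>_(j+1))_*.\<close>

definition seq_pos_obj :: "('o \<Rightarrow> 'o) \<Rightarrow> nat \<Rightarrow> ('o, 'm) sigseq \<Rightarrow> int \<Rightarrow> 'o" where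
  "seq_pos_obj So n S p = shift_obj So (p div int n) (fst S ! nat (p mod int n))"

definition seq_pos_mor :: "('o, 'm) addcat \<Rightarrow> ('o \<Rightarrow> 'o) \<Rightarrow> ('o \<Rightarrow> 'o \<Rightarrow> 'm \<Rightarrow> 'm) \<Rightarrow> nat \<Rightarrow> ('o, 'm) sigseq \<Rightarrow> int \<Rightarrow> 'm" where
  "seq_pos_mor C So Sm n S p =
     shift_mor C So Sm (p div int n) (fst S ! nat (p mod int n))
       (seq_tgt So (fst S) (nat (p mod int n))) (snd S ! nat (p mod int n))"

definition is_exact_sigseq :: "('o, 'm) addcat \<Rightarrow> ('o \<Rightarrow> 'o) \<Rightarrow> ('o \<Rightarrow> 'o \<Rightarrow> 'm \<Rightarrow> 'm) \<Rightarrow> nat \<Rightarrow> ('o, 'm) sigseq \<Rightarrow> bool" where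
  "is_exact_sigseq C So Sm n S \<longleftrightarrow> is_sigseq C So n S \<and>
     (\<forall>B p. hom_exact_at C B (seq_pos_obj So n S (p - 1)) (seq_pos_obj So n S p) (seq_pos_obj So n S (p + 1))
              (seq_pos_mor C So Sm n S (p - 1)) (seq_pos_mor C So Sm n S p))"

definition left_rotation :: "('o, 'm) addcat \<Rightarrow> ('o \<Rightarrow> 'o) \<Rightarrow> ('o \<Rightarrow> 'o \<Rightarrow> 'm \<Rightarrow> 'm) \<Rightarrow> nat \<Rightarrow> ('o, 'm) sigseq \<Rightarrow> ('o, 'm) sigseq" where
  "left_rotation C So Sm n S =
     (let As = fst S; \<alpha>s = snd S; s\<alpha> = Sm (As ! 0) (As ! 1) (\<alpha>s ! 0) in
      (tl As @ [So (As ! 0)],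
       tl \<alpha>s @ [if even n then s\<alpha> else ngt C (So (As ! 0)) (So (As ! 1)) s\<alpha>]))"

text \<open>Morphisms (\<phi>_1,...,\<phi>_n) of n-\<Sigma>-sequences, \<phi>s!j = \<phi>_(j+1).\<close>

definition is_sigseq_mor :: "('o, 'm) addcat \<Rightarrow> ('o \<Rightarrow> 'o) \<Rightarrow> ('o \<Rightarrow> 'o \<Rightarrow> 'm \<Rightarrow> 'm) \<Rightarrow> nat \<Rightarrow>
    ('o, 'm) sigseq \<Rightarrow> ('o, 'm) sigseq \<Rightarrow> 'm list \<Rightarrow> bool" where
  "is_sigseq_mor C So Sm n S T \<phi>s \<longleftrightarrow> length \<phi>s = n \<and>
     (\<forall>j < n. \<phi>s ! j \<in> hom C (fst S ! j) (fst T ! j)) \<and>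
     (\<forall>j. Suc j < n \<longrightarrow>
        cmp C (fst S ! j) (fst S ! Suc j) (fst T ! Suc j) (\<phi>s ! Suc j) (snd S ! j) =
        cmp C (fst S ! j) (fst T ! j) (fst T ! Suc j) (snd T ! j) (\<phi>s ! j)) \<and>
     cmp C (fst S ! (n - 1)) (So (fst S ! 0)) (So (fst T ! 0))
        (Sm (fst S ! 0) (fst T ! 0) (\<phi>s ! 0)) (snd S ! (n - 1)) =
     cmp C (fst S ! (n - 1)) (fst T ! (n - 1)) (So (fst T ! 0)) (snd T ! (n - 1)) (\<phi>s ! (n - 1))"

text \<open>Weak isomorphism: \<phi>_i and \<phi>_(i+1) are isomorphisms for some 1 \<le> i \<le> n,
where \<phi>_(n+1) = \<Sigma>\<phi>_1.\<close>

definition is_weak_iso :: "('o, 'm) addcat \<Rightarrow> ('o \<Rightarrow> 'o) \<Rightarrow> ('o \<Rightarrow> 'o \<Rightarrow> 'm \<Rightarrow> 'm) \<Rightarrow> nat \<Rightarrow>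
    ('o, 'm) sigseq \<Rightarrow> ('o, 'm) sigseq \<Rightarrow> 'm list \<Rightarrow> bool" where
  "is_weak_iso C So Sm n S T \<phi>s \<longleftrightarrow> is_sigseq_mor C So Sm n S T \<phi>s \<and>
     (\<exists>j < n. is_iso C (fst S ! j) (fst T ! j) (\<phi>s ! j) \<and>
        (if Suc j < n then is_iso C (fst S ! Suc j) (fst T ! Suc j) (\<phi>s ! Suc j)
         else is_iso C (So (fst S ! 0)) (So (fst T ! 0)) (Sm (fst S ! 0) (fst T ! 0) (\<phi>s ! 0))))"

definition trivial_sigseq :: "('o, 'm) addcat \<Rightarrow> ('o \<Rightarrow> 'o) \<Rightarrow> nat \<Rightarrow> 'o \<Rightarrow> 'o \<Rightarrow> ('o, 'm) sigseq" where
  "trivial_sigseq C So n Z A =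
     ([A, A] @ replicate (n - 2) Z,
      [idm C A, zro C A Z] @ replicate (n - 3) (zro C Z Z) @ [zro C Z (So A)])"

definition N1_star :: "('o, 'm) addcat \<Rightarrow> ('o \<Rightarrow> 'o) \<Rightarrow> ('o \<Rightarrow> 'o \<Rightarrow> 'm \<Rightarrow> 'm) \<Rightarrow> nat \<Rightarrow> ('o, 'm) sigseq set \<Rightarrow> bool" where
  "N1_star C So Sm n N \<longleftrightarrow>
     (\<forall>S T \<phi>s. is_exact_sigseq C So Sm n S \<longrightarrow> is_exact_sigseq C So Sm n T \<longrightarrow>
        is_weak_iso C So Sm n S T \<phi>s \<longrightarrow> S \<in> N \<longrightarrow> T \<in> N) \<and>
     (\<forall>A Z. is_zero_object C Z \<longrightarrow> trivial_sigseq C So n Z A \<in> N) \<and>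
     (\<forall>A1 A2 \<alpha>. \<alpha> \<in> hom C A1 A2 \<longrightarrow>
        (\<exists>S \<in> N. fst S ! 0 = A1 \<and> fst S ! 1 = A2 \<and> snd S ! 0 = \<alpha>))"

definition N2 :: "('o, 'm) addcat \<Rightarrow> ('o \<Rightarrow> 'o) \<Rightarrow> ('o \<Rightarrow> 'o \<Rightarrow> 'm \<Rightarrow> 'm) \<Rightarrow> nat \<Rightarrow> ('o, 'm) sigseq set \<Rightarrow> bool" where
  "N2 C So Sm n N \<longleftrightarrow>
     (\<forall>S. is_sigseq C So n S \<longrightarrow> (S \<in> N \<longleftrightarrow> left_rotation C So Sm n S \<in> N))"

definition N2_star :: "('o, 'm) addcat \<Rightarrow> ('o \<Rightarrow> 'o) \<Rightarrow> ('o \<Rightarrow> 'o \<Rightarrow> 'm \<Rightarrow> 'm) \<Rightarrow> nat \<Rightarrow> ('o, 'm) sigseq set \<Rightarrow> bool" where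
  "N2_star C So Sm n N \<longleftrightarrow> (\<forall>S \<in> N. left_rotation C So Sm n S \<in> N)"

definition N3 :: "('o, 'm) addcat \<Rightarrow> ('o \<Rightarrow> 'o) \<Rightarrow> ('o \<Rightarrow> 'o \<Rightarrow> 'm \<Rightarrow> 'm) \<Rightarrow> nat \<Rightarrow> ('o, 'm) sigseq set \<Rightarrow> bool" where
  "N3 C So Sm n N \<longleftrightarrow>
     (\<forall>S \<in> N. \<forall>T \<in> N. \<forall>\<phi>1 \<phi>2.
        \<phi>1 \<in> hom C (fst S ! 0) (fst T ! 0) \<longrightarrow> \<phi>2 \<in> hom C (fst S ! 1) (fst T ! 1) \<longrightarrow>
        cmp C (fst S ! 0) (fst S ! 1) (fst T ! 1) \<phi>2 (snd S ! 0) =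
        cmp C (fst S ! 0) (fst T ! 0) (fst T ! 1) (snd T ! 0) \<phi>1 \<longrightarrow>
        (\<exists>\<phi>s. is_sigseq_mor C So Sm n S T \<phi>s \<and> \<phi>s ! 0 = \<phi>1 \<and> \<phi>s ! 1 = \<phi>2))"

end

theory Submission
  imports Defs
begin

text \<open>Conversely, let \<N> be closed under left rotation and let S be
a sequence whose left rotation lies in \<N>; then all rotations R^k S with 1 \<le> k \<le> n lie in \<N>.
Every member Y of \<N> is exact at its second term: \<alpha>_2 \<alpha>_1 = 0 by comparing Y with a trivial
sequence via (N3), and every kernel element of \<alpha>_2 lifts along \<alpha>_1 by comparing the rotations
of a trivial sequence and of Y. As each term of the long Hom sequence of S is, up to \<Sigma> and
sign, the second term of some R^k S, the sequence S is exact. Now take T \<in> \<N> with the same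
first map as S (N1*c). The n-fold rotations of T and S are (-1)^n \<Sigma>T and (-1)^n \<Sigma>S, both in
\<N>, so (N3) extends the identities on \<Sigma>A_1, \<Sigma>A_2 to a morphism between them; desuspending
gives a weak isomorphism T \<rightarrow> S, and S \<in> \<N> by (N1*a).\<close>

locale additive_automorphism =
  fixes C :: "('o, 'm) addcat" and So :: "'o \<Rightarrow> 'o" and Sm :: "'o \<Rightarrow> 'o \<Rightarrow> 'm \<Rightarrow> 'm"
  assumes additive: "is_additive_category C"
    and automorphism: "is_automorphism C So Sm"
begin

lemma preadditive: "is_preadditive C"
  using additive unfolding is_additive_category_def by blast

lemma category: "is_category C"
  using preadditive unfolding is_preadditive_def by meson

lemma cmp_closed: "f \<in> hom C A B \<Longrightarrow> g \<in> hom C B D \<Longrightarrow> cmp C A B D g f \<in> hom C A D"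
  using category unfolding is_category_def by meson

lemma cmp_assoc: "f \<in> hom C A B \<Longrightarrow> g \<in> hom C B D \<Longrightarrow> h \<in> hom C D E \<Longrightarrow>
    cmp C A D E h (cmp C A B D g f) = cmp C A B E (cmp C B D E h g) f"
  using category unfolding is_category_def by meson

lemma idm_closed: "idm C A \<in> hom C A A"
  using category unfolding is_category_def by meson

lemma cmp_idm_left: "f \<in> hom C A B \<Longrightarrow> cmp C A B B (idm C B) f = f"
  using category unfolding is_category_def by meson

lemma cmp_idm_right: "f \<in> hom C A B \<Longrightarrow> cmp C A A B f (idm C A) = f"
  using category unfolding is_category_def by meson

lemma zro_closed: "zro C A B \<in> hom C A B"
  using preadditive unfolding is_preadditive_def by meson

lemma ngt_closed: "f \<in> hom C A B \<Longrightarrow> ngt C A B f \<in> hom C A B"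
  using preadditive unfolding is_preadditive_def by meson

lemma pls_assoc: "f \<in> hom C A B \<Longrightarrow> g \<in> hom C A B \<Longrightarrow> h \<in> hom C A B \<Longrightarrow>
    pls C A B (pls C A B f g) h = pls C A B f (pls C A B g h)"
  using preadditive unfolding is_preadditive_def by meson

lemma pls_commute: "f \<in> hom C A B \<Longrightarrow> g \<in> hom C A B \<Longrightarrow> pls C A B f g = pls C A B g f"
  using preadditive unfolding is_preadditive_def by meson

lemma zro_pls: "f \<in> hom C A B \<Longrightarrow> pls C A B (zro C A B) f = f"
  using preadditive unfolding is_preadditive_def by meson

lemma ngt_pls: "f \<in> hom C A B \<Longrightarrow> pls C A B (ngt C A B f) f = zro C A B"
  using preadditive unfolding is_preadditive_def by meson

lemma cmp_pls_left: "f \<in> hom C A B \<Longrightarrow> g \<in> hom C B D \<Longrightarrow> g' \<in> hom C B D \<Longrightarrow>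
    cmp C A B D (pls C B D g g') f = pls C A D (cmp C A B D g f) (cmp C A B D g' f)"
  using preadditive unfolding is_preadditive_def by meson

lemma cmp_pls_right: "f \<in> hom C A B \<Longrightarrow> f' \<in> hom C A B \<Longrightarrow> g \<in> hom C B D \<Longrightarrow>
    cmp C A B D g (pls C A B f f') = pls C A D (cmp C A B D g f) (cmp C A B D g f')"
  using preadditive unfolding is_preadditive_def by meson

lemma pls_zro: "f \<in> hom C A B \<Longrightarrow> pls C A B f (zro C A B) = f"
  by (metis pls_commute zro_closed zro_pls)

lemma pls_left_cancel:
  assumes "a \<in> hom C A B" "b \<in> hom C A B" "c \<in> hom C A B" "pls C A B a b = pls C A B a c"
  shows "b = c"
proof -
  have "b = pls C A B (pls C A B (ngt C A B a) a) b"
    using assms by (simp add: ngt_pls zro_pls)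
  also have "\<dots> = pls C A B (pls C A B (ngt C A B a) a) c"
    using assms by (simp add: pls_assoc ngt_closed)
  also have "\<dots> = c"
    using assms by (simp add: ngt_pls zro_pls)
  finally show ?thesis .
qed

lemma pls_idem_imp_zro: "f \<in> hom C A B \<Longrightarrow> pls C A B f f = f \<Longrightarrow> f = zro C A B"
  by (metis pls_left_cancel pls_zro zro_closed)

lemma cmp_zro_right:
  assumes "g \<in> hom C B D"
  shows "cmp C A B D g (zro C A B) = zro C A D"
proof (rule pls_idem_imp_zro)
  show "cmp C A B D g (zro C A B) \<in> hom C A D" using assms by (simp add: cmp_closed zro_closed)
  show "pls C A D (cmp C A B D g (zro C A B)) (cmp C A B D g (zro C A B)) = cmp C A B D g (zro C A B)"
    using assms by (metis cmp_pls_right zro_closed zro_pls)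
qed

lemma cmp_zro_left:
  assumes "f \<in> hom C A B"
  shows "cmp C A B D (zro C B D) f = zro C A D"
proof (rule pls_idem_imp_zro)
  show "cmp C A B D (zro C B D) f \<in> hom C A D" using assms by (simp add: cmp_closed zro_closed)
  show "pls C A D (cmp C A B D (zro C B D) f) (cmp C A B D (zro C B D) f) = cmp C A B D (zro C B D) f"
    using assms by (metis cmp_pls_left zro_closed zro_pls)
qed

lemma ngt_unique:
  assumes "f \<in> hom C A B" "g \<in> hom C A B" "pls C A B f g = zro C A B"
  shows "f = ngt C A B g"
proof -
  have "pls C A B g f = pls C A B g (ngt C A B g)"
    using assms by (metis ngt_closed ngt_pls pls_commute)
  thus ?thesis using assms by (meson pls_left_cancel ngt_closed)
qed

lemma cmp_ngt_left:
  assumes "f \<in> hom C A B" "g \<in> hom C B D"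
  shows "cmp C A B D (ngt C B D g) f = ngt C A D (cmp C A B D g f)"
proof -
  have "pls C A D (cmp C A B D (ngt C B D g) f) (cmp C A B D g f) = zro C A D"
    using assms by (metis cmp_pls_left ngt_closed ngt_pls cmp_zro_left)
  thus ?thesis using assms by (meson cmp_closed ngt_unique ngt_closed)
qed

lemma cmp_ngt_right:
  assumes "f \<in> hom C A B" "g \<in> hom C B D"
  shows "cmp C A B D g (ngt C A B f) = ngt C A D (cmp C A B D g f)"
proof -
  have "pls C A D (cmp C A B D g (ngt C A B f)) (cmp C A B D g f) = zro C A D"
    using assms by (metis cmp_pls_right ngt_closed ngt_pls cmp_zro_right)
  thus ?thesis using assms by (meson cmp_closed ngt_unique ngt_closed)
qed

lemma ngt_ngt: "f \<in> hom C A B \<Longrightarrow> ngt C A B (ngt C A B f) = f"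
  by (metis ngt_unique ngt_closed ngt_pls pls_commute)

lemma ngt_eq_zro_iff: "f \<in> hom C A B \<Longrightarrow> ngt C A B f = zro C A B \<longleftrightarrow> f = zro C A B"
  by (metis ngt_unique ngt_ngt zro_closed zro_pls)

lemma Sm_closed: "f \<in> hom C A B \<Longrightarrow> Sm A B f \<in> hom C (So A) (So B)"
  using automorphism unfolding is_automorphism_def by blast

lemma Sm_idm: "Sm A A (idm C A) = idm C (So A)"
  using automorphism unfolding is_automorphism_def by blast

lemma Sm_cmp: "f \<in> hom C A B \<Longrightarrow> g \<in> hom C B D \<Longrightarrow>
    Sm A D (cmp C A B D g f) = cmp C (So A) (So B) (So D) (Sm B D g) (Sm A B f)"
  using automorphism unfolding is_automorphism_def by blast

lemma bij_So: "bij So"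
  using automorphism unfolding is_automorphism_def by blast

lemma bij_betw_Sm: "bij_betw (Sm A B) (hom C A B) (hom C (So A) (So B))"
  using automorphism unfolding is_automorphism_def by blast

lemma inj_on_Sm: "inj_on (Sm A B) (hom C A B)"
  using bij_betw_Sm unfolding bij_betw_def by blast

lemma Sm_inj: "f \<in> hom C A B \<Longrightarrow> g \<in> hom C A B \<Longrightarrow> Sm A B f = Sm A B g \<Longrightarrow> f = g"
  using inj_on_Sm unfolding inj_on_def by blast

lemma Sm_image_hom: "Sm A B ` hom C A B = hom C (So A) (So B)"
  using bij_betw_Sm unfolding bij_betw_def by blast

lemma So_inv_So: "So (inv So X) = X"
  using bij_So by (simp add: bij_is_surj surj_f_inv_f)

lemma inv_So_So: "inv So (So X) = X"
  using bij_So by (simp add: bij_is_inj inv_f_f)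

lemma Sm_square_reflect:
  assumes f: "f \<in> hom C A B" and g: "g \<in> hom C B D" and f': "f' \<in> hom C A B'" and g': "g' \<in> hom C B' D"
    and eq: "cmp C (So A) (So B) (So D) (Sm B D g) (Sm A B f) = cmp C (So A) (So B') (So D) (Sm B' D g') (Sm A B' f')"
  shows "cmp C A B D g f = cmp C A B' D g' f'"
proof (rule Sm_inj)
  show "cmp C A B D g f \<in> hom C A D" "cmp C A B' D g' f' \<in> hom C A D"
    using f g f' g' by (simp_all add: cmp_closed)
  show "Sm A D (cmp C A B D g f) = Sm A D (cmp C A B' D g' f')"
    using f g f' g' eq by (simp add: Sm_cmp)
qed

definition Sm_inv :: "'o \<Rightarrow> 'o \<Rightarrow> 'm \<Rightarrow> 'm" where
  "Sm_inv A B g = inv_into (hom C A B) (Sm A B) g"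

lemma Sm_inv_closed: "g \<in> hom C (So A) (So B) \<Longrightarrow> Sm_inv A B g \<in> hom C A B"
  unfolding Sm_inv_def by (metis Sm_image_hom inv_into_into)

lemma Sm_Sm_inv: "g \<in> hom C (So A) (So B) \<Longrightarrow> Sm A B (Sm_inv A B g) = g"
  unfolding Sm_inv_def by (metis Sm_image_hom f_inv_into_f)

lemma Sm_inv_idm: "Sm_inv A A (idm C (So A)) = idm C A"
  using Sm_Sm_inv[OF idm_closed] Sm_idm Sm_inj[OF Sm_inv_closed[OF idm_closed] idm_closed] by simp

lemma zero_object_So:
  assumes Z: "is_zero_object C Z"
  shows "is_zero_object C (So Z)"
  unfolding is_zero_object_def
proof
  fix A
  have "hom C (So Z) A = Sm Z (inv So A) ` hom C Z (inv So A)"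
    using Sm_image_hom[of Z "inv So A"] by (simp add: So_inv_So)
  also have "\<dots> = {Sm Z (inv So A) (zro C Z (inv So A))}"
    using Z unfolding is_zero_object_def by simp
  finally have from_SZ: "hom C (So Z) A = {zro C (So Z) A}"
    using zro_closed[of "So Z" A] by auto
  have "hom C A (So Z) = Sm (inv So A) Z ` hom C (inv So A) Z"
    using Sm_image_hom[of "inv So A" Z] by (simp add: So_inv_So)
  also have "\<dots> = {Sm (inv So A) Z (zro C (inv So A) Z)}"
    using Z unfolding is_zero_object_def by simp
  finally have to_SZ: "hom C A (So Z) = {zro C A (So Z)}"
    using zro_closed[of A "So Z"] by auto
  show "hom C (So Z) A = {zro C (So Z) A} \<and> hom C A (So Z) = {zro C A (So Z)}"
    using from_SZ to_SZ ..
qed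

lemma Sm_zro: "Sm A B (zro C A B) = zro C (So A) (So B)"
proof -
  obtain Z where Z: "is_zero_object C Z"
    using additive unfolding is_additive_category_def by blast
  have SZ: "is_zero_object C (So Z)" using zero_object_So[OF Z] .
  have "Sm A B (zro C A B) = Sm A B (cmp C A Z B (zro C Z B) (zro C A Z))"
    by (simp add: cmp_zro_left zro_closed)
  also have "\<dots> = cmp C (So A) (So Z) (So B) (Sm Z B (zro C Z B)) (Sm A Z (zro C A Z))"
    by (simp add: Sm_cmp zro_closed)
  also have "Sm Z B (zro C Z B) = zro C (So Z) (So B)"
    using SZ Sm_closed[OF zro_closed[of Z B]] unfolding is_zero_object_def by blast
  also have "Sm A Z (zro C A Z) = zro C (So A) (So Z)"
    using SZ Sm_closed[OF zro_closed[of A Z]] unfolding is_zero_object_def by blast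
  also have "cmp C (So A) (So Z) (So B) (zro C (So Z) (So B)) (zro C (So A) (So Z)) = zro C (So A) (So B)"
    by (simp add: cmp_zro_left zro_closed)
  finally show ?thesis .
qed

lemma Sinv_obj_eq: "Sinv_obj So = inv So"
  by (simp add: Sinv_obj_def)

lemma funpow_inv_So_So: "(inv So ^^ k) (So X) = So ((inv So ^^ k) X)"
  by (induction k) (simp_all add: So_inv_So inv_So_So)

lemma funpow_So_So: "(So ^^ k) (So X) = So ((So ^^ k) X)"
  by (induction k) simp_all

lemma shift_obj_0: "shift_obj So 0 X = X"
  by (simp add: shift_obj_def)

lemma shift_obj_So: "shift_obj So i (So X) = So (shift_obj So i X)"
  by (simp add: shift_obj_def Sinv_obj_eq funpow_inv_So_So funpow_So_So)

lemma shift_obj_succ: "shift_obj So (i + 1) X = So (shift_obj So i X)"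
proof (cases "0 \<le> i")
  case True
  hence "nat (i + 1) = Suc (nat i)" by simp
  thus ?thesis using True by (simp add: shift_obj_def)
next
  case False
  define k where "k = nat (- i) - 1"
  have k: "i = - int (Suc k)"
    using False unfolding k_def by simp
  have "shift_obj So (i + 1) X = (inv So ^^ k) X"
    using k by (cases k) (auto simp: shift_obj_def Sinv_obj_eq nat_add_distrib)
  moreover have "shift_obj So i X = inv So ((inv So ^^ k) X)"
    using k by (simp add: shift_obj_def Sinv_obj_eq nat_add_distrib)
  ultimately show ?thesis by (simp add: So_inv_So)
qed

lemma Sinv_mor_eq: "Sinv_mor C So Sm X Y g = Sm_inv (inv So X) (inv So Y) g"
  by (simp add: Sinv_mor_def Sm_inv_def Sinv_obj_eq)

lemma Sinv_mor_closed: "g \<in> hom C X Y \<Longrightarrow> Sinv_mor C So Sm X Y g \<in> hom C (inv So X) (inv So Y)"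
  unfolding Sinv_mor_eq by (rule Sm_inv_closed) (simp add: So_inv_So)

lemma Sm_Sinv_mor: "g \<in> hom C X Y \<Longrightarrow> Sm (inv So X) (inv So Y) (Sinv_mor C So Sm X Y g) = g"
  unfolding Sinv_mor_eq by (rule Sm_Sm_inv) (simp add: So_inv_So)

lemma shift_mor_pos_closed:
  "f \<in> hom C X Y \<Longrightarrow> shift_mor_pos So Sm k X Y f \<in> hom C ((So ^^ k) X) ((So ^^ k) Y)"
  by (induction k) (simp_all add: Sm_closed)

lemma shift_mor_neg_closed:
  "f \<in> hom C X Y \<Longrightarrow> shift_mor_neg C So Sm k X Y f \<in> hom C ((inv So ^^ k) X) ((inv So ^^ k) Y)"
  by (induction k) (simp_all add: Sinv_mor_closed Sinv_obj_eq)

lemma shift_mor_closed: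
  "f \<in> hom C X Y \<Longrightarrow> shift_mor C So Sm i X Y f \<in> hom C (shift_obj So i X) (shift_obj So i Y)"
  by (simp add: shift_mor_def shift_obj_def shift_mor_pos_closed shift_mor_neg_closed Sinv_obj_eq)

lemma shift_mor_0: "shift_mor C So Sm 0 X Y f = f"
  by (simp add: shift_mor_def)

lemma shift_mor_succ:
  assumes f: "f \<in> hom C X Y"
  shows "shift_mor C So Sm (i + 1) X Y f = Sm (shift_obj So i X) (shift_obj So i Y) (shift_mor C So Sm i X Y f)"
proof (cases "0 \<le> i")
  case True
  hence "nat (i + 1) = Suc (nat i)" by simp
  thus ?thesis using True by (simp add: shift_obj_def shift_mor_def)
next
  case False
  define k where "k = nat (- i) - 1"
  have k: "i = - int (Suc k)"
    using False unfolding k_def by simp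
  have "shift_mor C So Sm (i + 1) X Y f = shift_mor_neg C So Sm k X Y f"
    using k by (cases k) (auto simp: shift_mor_def nat_add_distrib)
  moreover have "shift_mor C So Sm i X Y f =
      Sinv_mor C So Sm ((inv So ^^ k) X) ((inv So ^^ k) Y) (shift_mor_neg C So Sm k X Y f)"
    using k by (simp add: shift_mor_def Sinv_obj_eq nat_add_distrib)
  moreover have "shift_obj So i X = inv So ((inv So ^^ k) X)" "shift_obj So i Y = inv So ((inv So ^^ k) Y)"
    using k by (simp_all add: shift_obj_def Sinv_obj_eq nat_add_distrib)
  ultimately show ?thesis using Sm_Sinv_mor[OF shift_mor_neg_closed[OF f]] by simp
qed

lemma hom_exact_at_Sm_iff:
  assumes u: "u \<in> hom C W X" and v: "v \<in> hom C X Y"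
  shows "hom_exact_at C (So B) (So W) (So X) (So Y) (Sm W X u) (Sm X Y v) \<longleftrightarrow> hom_exact_at C B W X Y u v"
proof -
  define K where "K = {h \<in> hom C B X. cmp C B X Y v h = zro C B Y}"
  define I where "I = cmp C B W X u ` hom C B W"
  have "K \<subseteq> hom C B X" "I \<subseteq> hom C B X"
    unfolding K_def I_def using u cmp_closed by auto
  hence inj: "Sm B X ` K = Sm B X ` I \<longleftrightarrow> K = I"
    using inj_on_image_eq_iff[OF inj_on_Sm] by simp
  have "{h \<in> hom C (So B) (So X). cmp C (So B) (So X) (So Y) (Sm X Y v) h = zro C (So B) (So Y)}
      = {h' \<in> Sm B X ` hom C B X. cmp C (So B) (So X) (So Y) (Sm X Y v) h' = zro C (So B) (So Y)}"
    by (simp add: Sm_image_hom)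
  also have "\<dots> = Sm B X ` K"
  proof -
    have "cmp C (So B) (So X) (So Y) (Sm X Y v) (Sm B X h) = zro C (So B) (So Y) \<longleftrightarrow> cmp C B X Y v h = zro C B Y"
      if h: "h \<in> hom C B X" for h
    proof -
      have "cmp C (So B) (So X) (So Y) (Sm X Y v) (Sm B X h) = Sm B Y (cmp C B X Y v h)"
        using h v by (simp add: Sm_cmp)
      moreover have "Sm B Y (cmp C B X Y v h) = Sm B Y (zro C B Y) \<longleftrightarrow> cmp C B X Y v h = zro C B Y"
        using Sm_inj[OF cmp_closed[OF h v] zro_closed] by auto
      ultimately show ?thesis by (simp add: Sm_zro)
    qed
    thus ?thesis unfolding K_def by auto
  qed
  finally have kernel: "{h \<in> hom C (So B) (So X). cmp C (So B) (So X) (So Y) (Sm X Y v) h = zro C (So B) (So Y)}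
      = Sm B X ` K" .
  have image: "cmp C (So B) (So W) (So X) (Sm W X u) ` hom C (So B) (So W) = Sm B X ` I"
    unfolding I_def image_image Sm_image_hom[symmetric] using u by (intro image_cong refl) (simp add: Sm_cmp)
  show ?thesis unfolding hom_exact_at_def kernel image K_def[symmetric] I_def[symmetric] inj ..
qed

lemma hom_exact_at_Sm_all_iff:
  assumes "u \<in> hom C W X" and "v \<in> hom C X Y"
  shows "(\<forall>B. hom_exact_at C B (So W) (So X) (So Y) (Sm W X u) (Sm X Y v)) \<longleftrightarrow> (\<forall>B. hom_exact_at C B W X Y u v)"
  using hom_exact_at_Sm_iff[OF assms] by (metis So_inv_So)

lemma hom_exact_at_ngt_right:
  assumes "v \<in> hom C X Y"
  shows "hom_exact_at C B W X Y u (ngt C X Y v) \<longleftrightarrow> hom_exact_at C B W X Y u v"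
proof -
  have "{h \<in> hom C B X. cmp C B X Y (ngt C X Y v) h = zro C B Y} = {h \<in> hom C B X. cmp C B X Y v h = zro C B Y}"
    using assms by (auto simp: cmp_ngt_left ngt_eq_zro_iff cmp_closed zro_closed)
  thus ?thesis unfolding hom_exact_at_def by simp
qed

lemma hom_exact_at_ngt_left:
  assumes u: "u \<in> hom C W X"
  shows "hom_exact_at C B W X Y (ngt C W X u) v \<longleftrightarrow> hom_exact_at C B W X Y u v"
proof -
  have "cmp C B W X (ngt C W X u) g = cmp C B W X u (ngt C B W g)" if "g \<in> hom C B W" for g
    using u that by (simp add: cmp_ngt_left cmp_ngt_right)
  hence "cmp C B W X (ngt C W X u) ` hom C B W = cmp C B W X u ` ngt C B W ` hom C B W"
    by (simp add: image_image)
  also have "ngt C B W ` hom C B W = hom C B W"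
  proof
    show "ngt C B W ` hom C B W \<subseteq> hom C B W" using ngt_closed by blast
    show "hom C B W \<subseteq> ngt C B W ` hom C B W"
    proof
      fix g assume "g \<in> hom C B W"
      thus "g \<in> ngt C B W ` hom C B W" using ngt_ngt[of g] ngt_closed[of g] by (metis image_eqI)
    qed
  qed
  finally show ?thesis unfolding hom_exact_at_def by simp
qed

end

section \<open>The long Hom sequence of an n-\<Sigma>-sequence\<close>

locale sigma_sequences = additive_automorphism C So Sm
  for C :: "('o, 'm) addcat" and So :: "'o \<Rightarrow> 'o" and Sm :: "'o \<Rightarrow> 'o \<Rightarrow> 'm \<Rightarrow> 'm" +
  fixes n :: nat
  assumes n_ge_3: "3 \<le> n"
begin

abbreviation pos_obj :: "('o, 'm) sigseq \<Rightarrow> int \<Rightarrow> 'o" where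
  "pos_obj X q \<equiv> seq_pos_obj So n X q"

abbreviation pos_mor :: "('o, 'm) sigseq \<Rightarrow> int \<Rightarrow> 'm" where
  "pos_mor X q \<equiv> seq_pos_mor C So Sm n X q"

lemma n_pos: "0 < n"
  using n_ge_3 by simp

lemma sigseq_length: "is_sigseq C So n X \<Longrightarrow> length (fst X) = n \<and> length (snd X) = n"
  unfolding is_sigseq_def by blast

lemma sigseq_nth_closed: "is_sigseq C So n X \<Longrightarrow> j < n \<Longrightarrow> snd X ! j \<in> hom C (fst X ! j) (seq_tgt So (fst X) j)"
  unfolding is_sigseq_def by blast

lemma seq_tgt_less: "length As = n \<Longrightarrow> Suc j < n \<Longrightarrow> seq_tgt So As j = As ! Suc j"
  by (simp add: seq_tgt_def)

lemma pos_obj_nat: "m < n \<Longrightarrow> pos_obj X (int m) = fst X ! m"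
  by (simp add: seq_pos_obj_def shift_obj_0)

lemma pos_mor_nat: "m < n \<Longrightarrow> pos_mor X (int m) = snd X ! m"
  by (simp add: seq_pos_mor_def shift_mor_0)

lemma pos_obj_period: "pos_obj X (q + int n) = So (pos_obj X q)"
  using n_pos by (simp add: seq_pos_obj_def div_add_self2 shift_obj_succ)

lemma shift_obj_seq_tgt:
  assumes X: "is_sigseq C So n X"
  shows "shift_obj So (q div int n) (seq_tgt So (fst X) (nat (q mod int n))) = pos_obj X (q + 1)"
proof -
  define i j where "i = q div int n" and "j = q mod int n"
  have q: "q = i * int n + j" "0 \<le> j" "j < int n"
    unfolding i_def j_def using n_pos by simp_all
  have len: "length (fst X) = n" using sigseq_length[OF X] ..
  show ?thesis
  proof (cases "j + 1 < int n")
    case True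
    have "(q + 1) div int n = i" "(q + 1) mod int n = j + 1"
      using q True by (simp_all add: q(1) add.assoc)
    moreover have "Suc (nat j) < n"
      using True q(2) by arith
    hence "seq_tgt So (fst X) (nat j) = fst X ! nat (j + 1)"
      using q(2) len by (simp add: seq_tgt_def nat_add_distrib)
    ultimately show ?thesis
      unfolding seq_pos_obj_def i_def[symmetric] j_def[symmetric] by simp
  next
    case False
    hence j: "j = int n - 1" using q by simp
    hence "q + 1 = 0 + (i + 1) * int n" using q by (simp add: algebra_simps)
    hence "(q + 1) div int n = i + 1" "(q + 1) mod int n = 0"
      using n_pos by simp_all
    moreover have "\<not> Suc (nat j) < n"
      using j by arith
    hence "seq_tgt So (fst X) (nat j) = So (fst X ! 0)"
      using len by (simp add: seq_tgt_def)
    ultimately show ?thesis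
      unfolding seq_pos_obj_def i_def[symmetric] j_def[symmetric] by (simp add: shift_obj_So shift_obj_succ)
  qed
qed

lemma pos_obj_succ_nat: "is_sigseq C So n X \<Longrightarrow> m < n \<Longrightarrow> pos_obj X (int m + 1) = seq_tgt So (fst X) m"
  using shift_obj_seq_tgt[of X "int m"] by (simp add: shift_obj_0)

lemma pos_mor_closed: "is_sigseq C So n X \<Longrightarrow> pos_mor X q \<in> hom C (pos_obj X q) (pos_obj X (q + 1))"
  using shift_mor_closed[OF sigseq_nth_closed, of X "nat (q mod int n)" "q div int n"] shift_obj_seq_tgt[of X q] n_pos
  unfolding seq_pos_mor_def seq_pos_obj_def by (simp add: nat_less_iff)

lemma pos_mor_period:
  assumes X: "is_sigseq C So n X"
  shows "pos_mor X (q + int n) = Sm (pos_obj X q) (pos_obj X (q + 1)) (pos_mor X q)"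
  using shift_mor_succ[OF sigseq_nth_closed[OF X], of "nat (q mod int n)" "q div int n"] shift_obj_seq_tgt[OF X, of q] n_pos
  unfolding seq_pos_mor_def seq_pos_obj_def by (simp add: nat_less_iff div_add_self2)

definition exact_at_pos :: "('o, 'm) sigseq \<Rightarrow> int \<Rightarrow> bool" where
  "exact_at_pos X p \<longleftrightarrow>
     (\<forall>B. hom_exact_at C B (pos_obj X (p - 1)) (pos_obj X p) (pos_obj X (p + 1)) (pos_mor X (p - 1)) (pos_mor X p))"

lemma exact_at_pos_period:
  assumes X: "is_sigseq C So n X"
  shows "exact_at_pos X (p + int n) \<longleftrightarrow> exact_at_pos X p"
proof -
  have shifted: "p + int n - 1 = (p - 1) + int n" "p + int n + 1 = (p + 1) + int n" by simp_all
  have u: "pos_mor X (p - 1) \<in> hom C (pos_obj X (p - 1)) (pos_obj X p)"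
    using pos_mor_closed[OF X, of "p - 1"] by simp
  have v: "pos_mor X p \<in> hom C (pos_obj X p) (pos_obj X (p + 1))"
    using pos_mor_closed[OF X, of p] .
  show ?thesis
    unfolding exact_at_pos_def shifted pos_obj_period pos_mor_period[OF X]
    using hom_exact_at_Sm_all_iff[OF u v] by simp
qed

lemma exact_at_pos_period_mult:
  assumes X: "is_sigseq C So n X"
  shows "exact_at_pos X (p + m * int n) \<longleftrightarrow> exact_at_pos X p"
proof (induction m rule: int_induct[where k = 0])
  case (step1 i)
  thus ?case using exact_at_pos_period[OF X, of "p + i * int n"] by (simp add: algebra_simps)
next
  case (step2 i)
  thus ?case using exact_at_pos_period[OF X, of "p + (i - 1) * int n"] by (simp add: algebra_simps)
qed simp

lemma exact_sigseq_if_window: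
  assumes X: "is_sigseq C So n X"
    and window: "\<And>p. a \<le> p \<Longrightarrow> p < a + int n \<Longrightarrow> exact_at_pos X p"
  shows "is_exact_sigseq C So Sm n X"
  unfolding is_exact_sigseq_def
proof (intro conjI X allI)
  fix B p
  define r where "r = a + (p - a) mod int n"
  have "a \<le> r" "r < a + int n" unfolding r_def using n_pos by simp_all
  hence "exact_at_pos X r" by (rule window)
  moreover have "p = r + ((p - a) div int n) * int n"
    unfolding r_def by (metis add.commute add.left_commute diff_add_cancel div_mult_mod_eq)
  ultimately have "exact_at_pos X p"
    using exact_at_pos_period_mult[OF X] by metis
  thus "hom_exact_at C B (pos_obj X (p - 1)) (pos_obj X p) (pos_obj X (p + 1)) (pos_mor X (p - 1)) (pos_mor X p)"
    unfolding exact_at_pos_def by blast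
qed


section \<open>Rotations\<close>

definition signed :: "'o \<Rightarrow> 'o \<Rightarrow> 'm \<Rightarrow> 'm" where
  "signed X Y f = (if even n then f else ngt C X Y f)"

lemma signed_closed: "f \<in> hom C X Y \<Longrightarrow> signed X Y f \<in> hom C X Y"
  by (simp add: signed_def ngt_closed)

lemma signed_inj: "f \<in> hom C X Y \<Longrightarrow> g \<in> hom C X Y \<Longrightarrow> signed X Y f = signed X Y g \<Longrightarrow> f = g"
  by (metis signed_def ngt_ngt)

lemma cmp_signed_left: "f \<in> hom C A B \<Longrightarrow> g \<in> hom C B D \<Longrightarrow>
    cmp C A B D (signed B D g) f = signed A D (cmp C A B D g f)"
  by (simp add: signed_def cmp_ngt_left)

lemma cmp_signed_right: "f \<in> hom C A B \<Longrightarrow> g \<in> hom C B D \<Longrightarrow>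
    cmp C A B D g (signed A B f) = signed A D (cmp C A B D g f)"
  by (simp add: signed_def cmp_ngt_right)

lemma signed_square_iff:
  assumes "x \<in> hom C P Q" "p \<in> hom C Q R" "y \<in> hom C Q' R" "p' \<in> hom C P Q'"
  shows "cmp C P Q R p (signed P Q x) = cmp C P Q' R (signed Q' R y) p' \<longleftrightarrow> cmp C P Q R p x = cmp C P Q' R y p'"
  using assms by (metis cmp_closed cmp_signed_left cmp_signed_right signed_inj)

lemma hom_exact_at_signed_left: "u \<in> hom C W X \<Longrightarrow> hom_exact_at C B W X Y (signed W X u) v \<longleftrightarrow> hom_exact_at C B W X Y u v"
  by (simp add: signed_def hom_exact_at_ngt_left)

lemma hom_exact_at_signed_right: "v \<in> hom C X Y \<Longrightarrow> hom_exact_at C B W X Y u (signed X Y v) \<longleftrightarrow> hom_exact_at C B W X Y u v"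
  by (simp add: signed_def hom_exact_at_ngt_right)

lemma signed_Sm_square_reflect:
  assumes f: "f \<in> hom C A B" and g: "g \<in> hom C B D" and f': "f' \<in> hom C A B'" and g': "g' \<in> hom C B' D"
    and square: "cmp C (So A) (So B) (So D) (Sm B D g) (signed (So A) (So B) (Sm A B f)) =
      cmp C (So A) (So B') (So D) (signed (So B') (So D) (Sm B' D g')) (Sm A B' f')"
  shows "cmp C A B D g f = cmp C A B' D g' f'"
  by (rule Sm_square_reflect[OF f g f' g'])
    (use square signed_square_iff[OF Sm_closed[OF f] Sm_closed[OF g] Sm_closed[OF g'] Sm_closed[OF f']] in simp)

text \<open>The map (-1)^n \<Sigma>\<alpha>_(j+1) into which \<alpha>_(j+1) turns once X has been rotated past it.\<close>

definition susp_mor :: "('o, 'm) sigseq \<Rightarrow> nat \<Rightarrow> 'm" where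
  "susp_mor X j = signed (So (fst X ! j)) (So (seq_tgt So (fst X) j)) (Sm (fst X ! j) (seq_tgt So (fst X) j) (snd X ! j))"

lemma susp_mor_closed: "is_sigseq C So n X \<Longrightarrow> j < n \<Longrightarrow> susp_mor X j \<in> hom C (So (fst X ! j)) (So (seq_tgt So (fst X) j))"
  unfolding susp_mor_def by (intro signed_closed Sm_closed sigseq_nth_closed)

definition rotate_by :: "nat \<Rightarrow> ('o, 'm) sigseq \<Rightarrow> ('o, 'm) sigseq" where
  "rotate_by k X = (drop k (fst X) @ map So (take k (fst X)), drop k (snd X) @ map (susp_mor X) [0..<k])"

lemma fst_rotate_by_nth:
  "length (fst X) = n \<Longrightarrow> k \<le> n \<Longrightarrow> i < n \<Longrightarrow>
    fst (rotate_by k X) ! i = (if i < n - k then fst X ! (k + i) else So (fst X ! (i - (n - k))))"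
  by (simp add: rotate_by_def nth_append)

lemma snd_rotate_by_nth:
  "length (fst X) = n \<Longrightarrow> length (snd X) = n \<Longrightarrow> k \<le> n \<Longrightarrow> i < n \<Longrightarrow>
    snd (rotate_by k X) ! i = (if i < n - k then snd X ! (k + i) else susp_mor X (i - (n - k)))"
  by (auto simp: rotate_by_def nth_append)

lemma rotate_by_n_nth:
  "length (fst X) = n \<Longrightarrow> length (snd X) = n \<Longrightarrow> i < n \<Longrightarrow>
    fst (rotate_by n X) ! i = So (fst X ! i) \<and> snd (rotate_by n X) ! i = susp_mor X i"
  by (simp add: fst_rotate_by_nth snd_rotate_by_nth)

lemma left_rotation_rotate_by:
  assumes len: "length (fst X) = n" "length (snd X) = n" and k: "k < n"
  shows "left_rotation C So Sm n (rotate_by k X) = rotate_by (Suc k) X"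
proof -
  obtain As \<alpha>s where X: "X = (As, \<alpha>s)" by fastforce
  have l: "length As = n" "length \<alpha>s = n" using len X by auto
  have tgt: "(drop k As @ map So (take k As)) ! 1 = seq_tgt So As k"
  proof (cases "Suc k < n")
    case True
    hence "Suc 0 < n - k" by simp
    thus ?thesis using True l by (simp add: nth_append seq_tgt_def)
  next
    case False
    hence "k = n - 1" "0 < k" using k n_ge_3 by auto
    thus ?thesis using l by (simp add: nth_append seq_tgt_def)
  qed
  have "take (Suc k) As = take k As @ [As ! k]"
    using l k by (simp add: take_Suc_conv_app_nth)
  thus ?thesis
    using l k tgt unfolding X rotate_by_def left_rotation_def Let_def
    by (simp add: nth_append drop_Suc tl_drop susp_mor_def signed_def)
qed

lemma funpow_left_rotation:
  assumes "length (fst X) = n" "length (snd X) = n"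
  shows "k \<le> n \<Longrightarrow> (left_rotation C So Sm n ^^ k) X = rotate_by k X"
proof (induction k)
  case 0
  thus ?case by (simp add: rotate_by_def)
next
  case (Suc k)
  thus ?case using left_rotation_rotate_by[OF assms, of k] by simp
qed


lemma pos_obj_rotate_by:
  assumes len: "length (fst X) = n" and k: "k \<le> n" and q: "q < n"
  shows "pos_obj (rotate_by k X) (int q) = pos_obj X (int q + int k)"
proof (cases "q < n - k")
  case True
  hence "pos_obj X (int q + int k) = fst X ! (k + q)"
    using pos_obj_nat[of "k + q" X] by (simp add: add.commute)
  thus ?thesis using True len k q by (simp add: pos_obj_nat fst_rotate_by_nth)
next
  case False
  hence "int q + int k = int (q - (n - k)) + int n" "q - (n - k) < n" using k q by simp_all
  hence "pos_obj X (int q + int k) = So (fst X ! (q - (n - k)))"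
    by (simp only: pos_obj_period pos_obj_nat)
  thus ?thesis using False len k q by (simp add: pos_obj_nat fst_rotate_by_nth)
qed

lemma pos_mor_rotate_by:
  assumes X: "is_sigseq C So n X" and k: "k \<le> n" and q: "q < n"
  shows "pos_mor (rotate_by k X) (int q) =
    (if q + k < n then pos_mor X (int q + int k)
     else signed (pos_obj X (int q + int k)) (pos_obj X (int q + int k + 1)) (pos_mor X (int q + int k)))"
proof (cases "q < n - k")
  case True
  hence "pos_mor X (int q + int k) = snd X ! (k + q)" "q + k < n"
    using pos_mor_nat[of "k + q" X] by (simp_all add: add.commute)
  thus ?thesis using True X k q by (simp add: pos_mor_nat snd_rotate_by_nth sigseq_length)
next
  case False
  define j where "j = q - (n - k)"
  have j: "int q + int k = int j + int n" "j < n" "\<not> q + k < n"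
    using False k q unfolding j_def by simp_all
  have tgt: "pos_obj X (int j + int n + 1) = So (seq_tgt So (fst X) j)"
  proof -
    have "int j + int n + 1 = (int j + 1) + int n" by simp
    thus ?thesis using pos_obj_succ_nat[OF X j(2)] by (simp only: pos_obj_period)
  qed
  have "pos_mor (rotate_by k X) (int q) = susp_mor X j"
    using False X k q unfolding j_def by (simp add: pos_mor_nat snd_rotate_by_nth sigseq_length)
  also have "\<dots> = signed (pos_obj X (int q + int k)) (pos_obj X (int q + int k + 1)) (pos_mor X (int q + int k))"
    unfolding j(1) susp_mor_def tgt pos_obj_period pos_mor_period[OF X]
    using X j(2) by (simp add: pos_obj_nat pos_mor_nat pos_obj_succ_nat)
  finally show ?thesis using j(3) by simp
qed

lemma exact_at_pos_rotate_by:
  assumes X: "is_sigseq C So n X" and k: "k \<le> n"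
  shows "exact_at_pos (rotate_by k X) 1 \<longleftrightarrow> exact_at_pos X (int k + 1)"
proof -
  let ?Y = "rotate_by k X"
  have len: "length (fst X) = n" using sigseq_length[OF X] ..
  have obj: "pos_obj ?Y 0 = pos_obj X (int k)" "pos_obj ?Y 1 = pos_obj X (int k + 1)"
      "pos_obj ?Y 2 = pos_obj X (int k + 2)"
    using pos_obj_rotate_by[OF len k, of 0] pos_obj_rotate_by[OF len k, of 1] pos_obj_rotate_by[OF len k, of 2]
      n_ge_3 by (simp_all add: add.commute)
  have mor: "pos_mor ?Y 0 = (if k < n then pos_mor X (int k)
        else signed (pos_obj X (int k)) (pos_obj X (int k + 1)) (pos_mor X (int k)))"
      "pos_mor ?Y 1 = (if Suc k < n then pos_mor X (int k + 1)
        else signed (pos_obj X (int k + 1)) (pos_obj X (int k + 2)) (pos_mor X (int k + 1)))"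
    using pos_mor_rotate_by[OF X k, of 0] pos_mor_rotate_by[OF X k, of 1] n_ge_3
    by (simp_all add: add.commute add.left_commute)
  have u: "pos_mor X (int k) \<in> hom C (pos_obj X (int k)) (pos_obj X (int k + 1))"
    using pos_mor_closed[OF X] .
  have v: "pos_mor X (int k + 1) \<in> hom C (pos_obj X (int k + 1)) (pos_obj X (int k + 2))"
    using pos_mor_closed[OF X, of "int k + 1"] by (simp add: add.assoc)
  show ?thesis
    unfolding exact_at_pos_def using obj mor
    by (simp add: add.assoc hom_exact_at_signed_left[OF u] hom_exact_at_signed_right[OF v])
qed

lemma exact_at_pos_1_iff:
  "exact_at_pos Y 1 \<longleftrightarrow> (\<forall>B. hom_exact_at C B (fst Y ! 0) (fst Y ! 1) (fst Y ! 2) (snd Y ! 0) (snd Y ! 1))"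
  using pos_obj_nat[of 0 Y] pos_obj_nat[of 1 Y] pos_obj_nat[of 2 Y] pos_mor_nat[of 0 Y] pos_mor_nat[of 1 Y] n_ge_3
  unfolding exact_at_pos_def by simp

lemma sigseq_mor_closed:
  "is_sigseq_mor C So Sm n S T \<phi>s \<Longrightarrow> j < n \<Longrightarrow> \<phi>s ! j \<in> hom C (fst S ! j) (fst T ! j)"
  unfolding is_sigseq_mor_def by blast

lemma sigseq_mor_square:
  "is_sigseq_mor C So Sm n S T \<phi>s \<Longrightarrow> Suc j < n \<Longrightarrow>
    cmp C (fst S ! j) (fst S ! Suc j) (fst T ! Suc j) (\<phi>s ! Suc j) (snd S ! j) =
    cmp C (fst S ! j) (fst T ! j) (fst T ! Suc j) (snd T ! j) (\<phi>s ! j)"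
  unfolding is_sigseq_mor_def by blast

lemma sigseq_mor_last_square:
  "is_sigseq_mor C So Sm n S T \<phi>s \<Longrightarrow>
    cmp C (fst S ! (n - 1)) (So (fst S ! 0)) (So (fst T ! 0)) (Sm (fst S ! 0) (fst T ! 0) (\<phi>s ! 0)) (snd S ! (n - 1)) =
    cmp C (fst S ! (n - 1)) (fst T ! (n - 1)) (So (fst T ! 0)) (snd T ! (n - 1)) (\<phi>s ! (n - 1))"
  unfolding is_sigseq_mor_def by blast

lemma weak_iso_if_idm_start:
  assumes "is_sigseq_mor C So Sm n T S \<phi>s" and "fst T ! 0 = fst S ! 0" "fst T ! 1 = fst S ! 1"
    and "\<phi>s ! 0 = idm C (fst S ! 0)" "\<phi>s ! 1 = idm C (fst S ! 1)"
  shows "is_weak_iso C So Sm n T S \<phi>s"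
  unfolding is_weak_iso_def
proof (intro conjI assms(1) exI[of _ 0])
  show "0 < n" using n_pos .
  show "is_iso C (fst T ! 0) (fst S ! 0) (\<phi>s ! 0)"
    "if Suc 0 < n then is_iso C (fst T ! Suc 0) (fst S ! Suc 0) (\<phi>s ! Suc 0)
     else is_iso C (So (fst T ! 0)) (So (fst S ! 0)) (Sm (fst T ! 0) (fst S ! 0) (\<phi>s ! 0))"
    using assms(2-5) n_ge_3 idm_closed cmp_idm_left unfolding is_iso_def by auto
qed

lemma sigseq_mor_desuspend:
  assumes T: "is_sigseq C So n T" and S: "is_sigseq C So n S"
    and ps: "is_sigseq_mor C So Sm n (rotate_by n T) (rotate_by n S) ps"
  shows "is_sigseq_mor C So Sm n T S (map (\<lambda>j. Sm_inv (fst T ! j) (fst S ! j) (ps ! j)) [0..<n])"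
proof -
  define \<phi> where "\<phi> j = Sm_inv (fst T ! j) (fst S ! j) (ps ! j)" for j
  have lT: "length (fst T) = n" "length (snd T) = n" and lS: "length (fst S) = n" "length (snd S) = n"
    using sigseq_length[OF T] sigseq_length[OF S] by auto
  note rot = rotate_by_n_nth[OF lT] rotate_by_n_nth[OF lS]
  have \<phi>_closed: "\<phi> j \<in> hom C (fst T ! j) (fst S ! j)" and Sm_\<phi>: "Sm (fst T ! j) (fst S ! j) (\<phi> j) = ps ! j"
    if j: "j < n" for j
  proof -
    have "ps ! j \<in> hom C (So (fst T ! j)) (So (fst S ! j))"
      using sigseq_mor_closed[OF ps j] rot j by simp
    thus "\<phi> j \<in> hom C (fst T ! j) (fst S ! j)" "Sm (fst T ! j) (fst S ! j) (\<phi> j) = ps ! j"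
      unfolding \<phi>_def by (simp_all add: Sm_inv_closed Sm_Sm_inv)
  qed
  show ?thesis
    unfolding is_sigseq_mor_def \<phi>_def[symmetric]
  proof (intro conjI allI impI)
    fix j assume j: "Suc j < n"
    hence tgt: "seq_tgt So (fst T) j = fst T ! Suc j" "seq_tgt So (fst S) j = fst S ! Suc j"
      using lT lS by (simp_all add: seq_tgt_less)
    have \<alpha>: "snd T ! j \<in> hom C (fst T ! j) (fst T ! Suc j)" and \<beta>: "snd S ! j \<in> hom C (fst S ! j) (fst S ! Suc j)"
      using sigseq_nth_closed[OF T, of j] sigseq_nth_closed[OF S, of j] j tgt by simp_all
    have "cmp C (So (fst T ! j)) (So (fst T ! Suc j)) (So (fst S ! Suc j))
          (Sm (fst T ! Suc j) (fst S ! Suc j) (\<phi> (Suc j))) (signed (So (fst T ! j)) (So (fst T ! Suc j)) (Sm (fst T ! j) (fst T ! Suc j) (snd T ! j))) =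
        cmp C (So (fst T ! j)) (So (fst S ! j)) (So (fst S ! Suc j))
          (signed (So (fst S ! j)) (So (fst S ! Suc j)) (Sm (fst S ! j) (fst S ! Suc j) (snd S ! j))) (Sm (fst T ! j) (fst S ! j) (\<phi> j))"
      using sigseq_mor_square[OF ps j] j rot tgt Sm_\<phi>[OF j] Sm_\<phi>[of j] by (simp add: susp_mor_def)
    thus "cmp C (fst T ! j) (fst T ! Suc j) (fst S ! Suc j) (map \<phi> [0..<n] ! Suc j) (snd T ! j) =
        cmp C (fst T ! j) (fst S ! j) (fst S ! Suc j) (snd S ! j) (map \<phi> [0..<n] ! j)"
      using signed_Sm_square_reflect[OF \<alpha> \<phi>_closed[OF j] \<phi>_closed \<beta>] j by simp
  next
    have ix: "n - 1 < n" "0 < n" using n_pos by simp_all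
    have tgt: "seq_tgt So (fst T) (n - 1) = So (fst T ! 0)" "seq_tgt So (fst S) (n - 1) = So (fst S ! 0)"
      using lT lS n_pos by (simp_all add: seq_tgt_def)
    have \<alpha>: "snd T ! (n - 1) \<in> hom C (fst T ! (n - 1)) (So (fst T ! 0))"
      and \<beta>: "snd S ! (n - 1) \<in> hom C (fst S ! (n - 1)) (So (fst S ! 0))"
      using sigseq_nth_closed[OF T ix(1)] sigseq_nth_closed[OF S ix(1)] tgt by simp_all
    have \<phi>0: "Sm (fst T ! 0) (fst S ! 0) (\<phi> 0) \<in> hom C (So (fst T ! 0)) (So (fst S ! 0))"
      using Sm_closed[OF \<phi>_closed[OF ix(2)]] .
    have "cmp C (So (fst T ! (n - 1))) (So (So (fst T ! 0))) (So (So (fst S ! 0)))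
          (Sm (So (fst T ! 0)) (So (fst S ! 0)) (Sm (fst T ! 0) (fst S ! 0) (\<phi> 0)))
          (signed (So (fst T ! (n - 1))) (So (So (fst T ! 0))) (Sm (fst T ! (n - 1)) (So (fst T ! 0)) (snd T ! (n - 1)))) =
        cmp C (So (fst T ! (n - 1))) (So (fst S ! (n - 1))) (So (So (fst S ! 0)))
          (signed (So (fst S ! (n - 1))) (So (So (fst S ! 0))) (Sm (fst S ! (n - 1)) (So (fst S ! 0)) (snd S ! (n - 1))))
          (Sm (fst T ! (n - 1)) (fst S ! (n - 1)) (\<phi> (n - 1)))"
      using sigseq_mor_last_square[OF ps] ix rot tgt Sm_\<phi>[OF ix(1)] Sm_\<phi>[OF ix(2)] by (simp add: susp_mor_def)
    thus "cmp C (fst T ! (n - 1)) (So (fst T ! 0)) (So (fst S ! 0)) (Sm (fst T ! 0) (fst S ! 0) (map \<phi> [0..<n] ! 0)) (snd T ! (n - 1)) =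
        cmp C (fst T ! (n - 1)) (fst S ! (n - 1)) (So (fst S ! 0)) (snd S ! (n - 1)) (map \<phi> [0..<n] ! (n - 1))"
      using signed_Sm_square_reflect[OF \<alpha> \<phi>0 \<phi>_closed[OF ix(1)] \<beta>] ix by simp
  qed (simp_all add: \<phi>_closed)
qed

lemma sigseq_first_maps_closed:
  assumes "is_sigseq C So n X"
  shows "snd X ! 0 \<in> hom C (fst X ! 0) (fst X ! 1)" "snd X ! 1 \<in> hom C (fst X ! 1) (fst X ! 2)"
  using sigseq_nth_closed[OF assms, of 0] sigseq_nth_closed[OF assms, of 1] sigseq_length[OF assms] n_ge_3
  by (simp_all add: seq_tgt_less numeral_2_eq_2)

lemma trivial_sigseq_nth:
  "fst (trivial_sigseq C So n Z A) ! 0 = A" "fst (trivial_sigseq C So n Z A) ! 1 = A"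
  "fst (trivial_sigseq C So n Z A) ! 2 = Z"
  "snd (trivial_sigseq C So n Z A) ! 0 = idm C A" "snd (trivial_sigseq C So n Z A) ! 1 = zro C A Z"
  "length (fst (trivial_sigseq C So n Z A)) = n" "length (snd (trivial_sigseq C So n Z A)) = n"
  using n_ge_3 by (simp_all add: trivial_sigseq_def nth_append)

end

section \<open>Classes satisfying (N1*), (N2*) and (N3)\<close>

locale rotation_closed_class = sigma_sequences C So Sm n
  for C :: "('o, 'm) addcat" and So :: "'o \<Rightarrow> 'o" and Sm :: "'o \<Rightarrow> 'o \<Rightarrow> 'm \<Rightarrow> 'm" and n :: nat +
  fixes N :: "('o, 'm) sigseq set"
  assumes N_sigseq: "\<forall>S \<in> N. is_sigseq C So n S"
    and N1_star: "N1_star C So Sm n N"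
    and N3: "N3 C So Sm n N"
    and N2_star: "N2_star C So Sm n N"
begin

lemma N_weak_iso_closed:
  "is_exact_sigseq C So Sm n S \<Longrightarrow> is_exact_sigseq C So Sm n T \<Longrightarrow> is_weak_iso C So Sm n S T \<phi>s \<Longrightarrow>
    S \<in> N \<Longrightarrow> T \<in> N"
  using N1_star unfolding N1_star_def by blast

lemma N_trivial: "is_zero_object C Z \<Longrightarrow> trivial_sigseq C So n Z A \<in> N"
  using N1_star unfolding N1_star_def by blast

lemma N_first_map: "\<alpha> \<in> hom C A1 A2 \<Longrightarrow> \<exists>S \<in> N. fst S ! 0 = A1 \<and> fst S ! 1 = A2 \<and> snd S ! 0 = \<alpha>"
  using N1_star unfolding N1_star_def by blast

lemma N_extend_mor:
  "S \<in> N \<Longrightarrow> T \<in> N \<Longrightarrow> \<phi>1 \<in> hom C (fst S ! 0) (fst T ! 0) \<Longrightarrow> \<phi>2 \<in> hom C (fst S ! 1) (fst T ! 1) \<Longrightarrow>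
    cmp C (fst S ! 0) (fst S ! 1) (fst T ! 1) \<phi>2 (snd S ! 0) = cmp C (fst S ! 0) (fst T ! 0) (fst T ! 1) (snd T ! 0) \<phi>1 \<Longrightarrow>
    \<exists>\<phi>s. is_sigseq_mor C So Sm n S T \<phi>s \<and> \<phi>s ! 0 = \<phi>1 \<and> \<phi>s ! 1 = \<phi>2"
  using N3 unfolding N3_def by blast

lemma N_left_rotation: "S \<in> N \<Longrightarrow> left_rotation C So Sm n S \<in> N"
  using N2_star unfolding N2_star_def by blast

lemma N_rotate_by: "S \<in> N \<Longrightarrow> k \<le> n \<Longrightarrow> rotate_by k S \<in> N"
proof -
  assume S: "S \<in> N" and k: "k \<le> n"
  have "(left_rotation C So Sm n ^^ k) S \<in> N"
    by (induction k) (simp_all add: S N_left_rotation)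
  thus ?thesis using funpow_left_rotation[OF _ _ k] sigseq_length N_sigseq S by metis
qed

lemma N_comp_zero:
  assumes Y: "Y \<in> N"
  shows "cmp C (fst Y ! 0) (fst Y ! 1) (fst Y ! 2) (snd Y ! 1) (snd Y ! 0) = zro C (fst Y ! 0) (fst Y ! 2)"
proof -
  obtain Z where Z: "is_zero_object C Z"
    using additive unfolding is_additive_category_def by blast
  let ?T = "trivial_sigseq C So n Z (fst Y ! 0)"
  have maps: "snd Y ! 0 \<in> hom C (fst Y ! 0) (fst Y ! 1)" "snd Y ! 1 \<in> hom C (fst Y ! 1) (fst Y ! 2)"
    using sigseq_first_maps_closed N_sigseq Y by auto
  have T: "?T \<in> N" using N_trivial[OF Z] .
  have "\<exists>\<phi>s. is_sigseq_mor C So Sm n ?T Y \<phi>s \<and> \<phi>s ! 0 = idm C (fst Y ! 0) \<and> \<phi>s ! 1 = snd Y ! 0"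
    by (rule N_extend_mor[OF T Y]) (use maps trivial_sigseq_nth in \<open>simp_all add: idm_closed cmp_idm_left cmp_idm_right\<close>)
  then obtain \<phi>s where \<phi>s: "is_sigseq_mor C So Sm n ?T Y \<phi>s" "\<phi>s ! 1 = snd Y ! 0"
    by blast
  have "cmp C (fst Y ! 0) Z (fst Y ! 2) (\<phi>s ! 2) (zro C (fst Y ! 0) Z) =
      cmp C (fst Y ! 0) (fst Y ! 1) (fst Y ! 2) (snd Y ! 1) (snd Y ! 0)"
    using sigseq_mor_square[OF \<phi>s(1), of 1] n_ge_3 \<phi>s(2) trivial_sigseq_nth by (simp add: numeral_2_eq_2)
  moreover have "\<phi>s ! 2 \<in> hom C Z (fst Y ! 2)"
    using sigseq_mor_closed[OF \<phi>s(1), of 2] n_ge_3 trivial_sigseq_nth by simp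
  ultimately show ?thesis using cmp_zro_right by metis
qed

text \<open>A kernel element h of \<alpha>_2 is lifted along \<alpha>_1 by comparing the rotated trivial
sequence B \<rightarrow> 0 \<rightarrow> ... \<rightarrow> \<Sigma>B \<rightarrow> \<Sigma>B with the rotation of Y via (h, 0); the lift is the desuspension
of the last component of the resulting morphism.\<close>

lemma N_kernel_subset_image:
  assumes Y: "Y \<in> N" and h: "h \<in> hom C B (fst Y ! 1)"
    and h_kernel: "cmp C B (fst Y ! 1) (fst Y ! 2) (snd Y ! 1) h = zro C B (fst Y ! 2)"
  shows "h \<in> cmp C B (fst Y ! 0) (fst Y ! 1) (snd Y ! 0) ` hom C B (fst Y ! 0)"
proof -
  obtain Z where Z: "is_zero_object C Z"
    using additive unfolding is_additive_category_def by blast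
  define T where "T = trivial_sigseq C So n Z B"
  have lT: "length (fst T) = n" "length (snd T) = n" and lY: "length (fst Y) = n" "length (snd Y) = n"
    using trivial_sigseq_nth sigseq_length N_sigseq Y unfolding T_def by auto
  have RT: "rotate_by 1 T \<in> N" and RY: "rotate_by 1 Y \<in> N"
    using N_rotate_by N_trivial[OF Z] Y n_ge_3 unfolding T_def by auto
  have tgt0: "seq_tgt So (fst T) 0 = B" "seq_tgt So (fst Y) 0 = fst Y ! 1"
    using lT lY n_ge_3 trivial_sigseq_nth unfolding T_def by (simp_all add: seq_tgt_def)
  have ix: "n - 1 < n" "0 < n - 1" "1 < n - 1" "\<not> n - 1 < n - 1" "n - 1 - (n - 1) = 0" "1 + 1 = (2 :: nat)"
    using n_ge_3 by auto
  have RT_nth: "fst (rotate_by 1 T) ! 0 = B" "fst (rotate_by 1 T) ! 1 = Z" "fst (rotate_by 1 T) ! (n - 1) = So B"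
      "snd (rotate_by 1 T) ! 0 = zro C B Z" "snd (rotate_by 1 T) ! (n - 1) = signed (So B) (So B) (Sm B B (idm C B))"
    using fst_rotate_by_nth[OF lT(1), of 1] snd_rotate_by_nth[OF lT, of 1] ix tgt0 trivial_sigseq_nth
    unfolding T_def susp_mor_def by (simp_all add: numeral_2_eq_2)
  have RY_nth: "fst (rotate_by 1 Y) ! 0 = fst Y ! 1" "fst (rotate_by 1 Y) ! 1 = fst Y ! 2"
      "fst (rotate_by 1 Y) ! (n - 1) = So (fst Y ! 0)" "snd (rotate_by 1 Y) ! 0 = snd Y ! 1"
      "snd (rotate_by 1 Y) ! (n - 1) = signed (So (fst Y ! 0)) (So (fst Y ! 1)) (Sm (fst Y ! 0) (fst Y ! 1) (snd Y ! 0))"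
    using fst_rotate_by_nth[OF lY(1), of 1] snd_rotate_by_nth[OF lY, of 1] ix tgt0
    unfolding susp_mor_def by (simp_all add: numeral_2_eq_2)
  have maps: "snd Y ! 0 \<in> hom C (fst Y ! 0) (fst Y ! 1)" "snd Y ! 1 \<in> hom C (fst Y ! 1) (fst Y ! 2)"
    using sigseq_first_maps_closed N_sigseq Y by auto
  obtain \<phi>s where \<phi>s: "is_sigseq_mor C So Sm n (rotate_by 1 T) (rotate_by 1 Y) \<phi>s" "\<phi>s ! 0 = h"
    using N_extend_mor[OF RT RY, of h "zro C Z (fst Y ! 2)"] RT_nth RY_nth h h_kernel maps
    by (auto simp: zro_closed cmp_zro_left cmp_zro_right)
  define g where "g = Sm_inv B (fst Y ! 0) (\<phi>s ! (n - 1))"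
  have last: "\<phi>s ! (n - 1) \<in> hom C (So B) (So (fst Y ! 0))"
    using sigseq_mor_closed[OF \<phi>s(1) ix(1)] RT_nth RY_nth by simp
  hence g: "g \<in> hom C B (fst Y ! 0)" "Sm B (fst Y ! 0) g = \<phi>s ! (n - 1)"
    unfolding g_def by (simp_all add: Sm_inv_closed Sm_Sm_inv)
  have "cmp C (So B) (So B) (So (fst Y ! 1)) (Sm B (fst Y ! 1) h) (signed (So B) (So B) (Sm B B (idm C B))) =
      cmp C (So B) (So (fst Y ! 0)) (So (fst Y ! 1))
        (signed (So (fst Y ! 0)) (So (fst Y ! 1)) (Sm (fst Y ! 0) (fst Y ! 1) (snd Y ! 0))) (Sm B (fst Y ! 0) g)"
    using sigseq_mor_last_square[OF \<phi>s(1)] RT_nth RY_nth \<phi>s(2) g(2) by simp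
  hence "cmp C B B (fst Y ! 1) h (idm C B) = cmp C B (fst Y ! 0) (fst Y ! 1) (snd Y ! 0) g"
    by (rule signed_Sm_square_reflect[OF idm_closed h g(1) maps(1)])
  thus ?thesis using g(1) h by (simp add: cmp_idm_right)
qed

lemma N_exact_at_pos_1:
  assumes Y: "Y \<in> N"
  shows "exact_at_pos Y 1"
  unfolding exact_at_pos_1_iff hom_exact_at_def
proof (intro allI equalityI subsetI)
  fix B h
  assume "h \<in> {h \<in> hom C B (fst Y ! 1). cmp C B (fst Y ! 1) (fst Y ! 2) (snd Y ! 1) h = zro C B (fst Y ! 2)}"
  thus "h \<in> cmp C B (fst Y ! 0) (fst Y ! 1) (snd Y ! 0) ` hom C B (fst Y ! 0)"
    using N_kernel_subset_image[OF Y] by blast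
next
  fix B h
  assume "h \<in> cmp C B (fst Y ! 0) (fst Y ! 1) (snd Y ! 0) ` hom C B (fst Y ! 0)"
  then obtain g where g: "g \<in> hom C B (fst Y ! 0)" "h = cmp C B (fst Y ! 0) (fst Y ! 1) (snd Y ! 0) g"
    by blast
  have maps: "snd Y ! 0 \<in> hom C (fst Y ! 0) (fst Y ! 1)" "snd Y ! 1 \<in> hom C (fst Y ! 1) (fst Y ! 2)"
    using sigseq_first_maps_closed N_sigseq Y by auto
  have "cmp C B (fst Y ! 1) (fst Y ! 2) (snd Y ! 1) h = zro C B (fst Y ! 2)"
    using g maps N_comp_zero[OF Y] by (simp add: cmp_assoc cmp_zro_left)
  thus "h \<in> {h \<in> hom C B (fst Y ! 1). cmp C B (fst Y ! 1) (fst Y ! 2) (snd Y ! 1) h = zro C B (fst Y ! 2)}"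
    using g maps by (simp add: cmp_closed)
qed

lemma exact_if_rotations_in_N:
  assumes X: "is_sigseq C So n X" and rotations: "\<And>k. 1 \<le> k \<Longrightarrow> k \<le> n \<Longrightarrow> rotate_by k X \<in> N"
  shows "is_exact_sigseq C So Sm n X"
proof (rule exact_sigseq_if_window[OF X, of 2])
  fix p :: int assume p: "2 \<le> p" "p < 2 + int n"
  define k where "k = nat (p - 1)"
  have k: "p = int k + 1" "1 \<le> k" "k \<le> n" using p unfolding k_def by auto
  have "exact_at_pos (rotate_by k X) 1" using N_exact_at_pos_1[OF rotations[OF k(2,3)]] .
  thus "exact_at_pos X p" using exact_at_pos_rotate_by[OF X k(3)] k(1) by simp
qed

lemma N_exact: "X \<in> N \<Longrightarrow> is_exact_sigseq C So Sm n X"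
  using exact_if_rotations_in_N N_sigseq N_rotate_by by blast

lemma N_rotate_by_if_left_rotation:
  assumes S: "is_sigseq C So n S" and RS: "left_rotation C So Sm n S \<in> N" and k: "1 \<le> k" "k \<le> n"
  shows "rotate_by k S \<in> N"
proof -
  obtain m where m: "k = Suc m" using k by (cases k) auto
  have "(left_rotation C So Sm n ^^ m) (left_rotation C So Sm n S) \<in> N"
    by (induction m) (simp_all add: RS N_left_rotation)
  thus ?thesis using funpow_left_rotation[OF _ _ k(2)] sigseq_length[OF S] unfolding m funpow_Suc_right by simp
qed

lemma mem_N_if_left_rotation:
  assumes S: "is_sigseq C So n S" and RS: "left_rotation C So Sm n S \<in> N"
  shows "S \<in> N"
proof -
  note rotations = N_rotate_by_if_left_rotation[OF S RS]
  obtain T where T: "T \<in> N" "fst T ! 0 = fst S ! 0" "fst T ! 1 = fst S ! 1" "snd T ! 0 = snd S ! 0"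
    using N_first_map[OF sigseq_first_maps_closed(1)[OF S]] by blast
  have sT: "is_sigseq C So n T" using N_sigseq T(1) by blast
  have n01: "0 < n" "1 < n" using n_ge_3 by auto
  have rot: "fst (rotate_by n T) ! 0 = So (fst S ! 0)" "fst (rotate_by n T) ! 1 = So (fst S ! 1)"
      "snd (rotate_by n T) ! 0 = susp_mor S 0"
      "fst (rotate_by n S) ! 0 = So (fst S ! 0)" "fst (rotate_by n S) ! 1 = So (fst S ! 1)"
      "snd (rotate_by n S) ! 0 = susp_mor S 0"
    using rotate_by_n_nth sigseq_length[OF sT] sigseq_length[OF S] T n01
    by (simp_all add: susp_mor_def seq_tgt_def)
  have "susp_mor S 0 \<in> hom C (So (fst S ! 0)) (So (fst S ! 1))"
    using susp_mor_closed[OF S n01(1)] sigseq_length[OF S] n01 by (simp add: seq_tgt_def)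
  hence "\<exists>\<phi>s. is_sigseq_mor C So Sm n (rotate_by n T) (rotate_by n S) \<phi>s \<and>
      \<phi>s ! 0 = idm C (So (fst S ! 0)) \<and> \<phi>s ! 1 = idm C (So (fst S ! 1))"
    using rot n01
    by (intro N_extend_mor[OF N_rotate_by[OF T(1) order_refl] rotations[OF _ order_refl]])
      (simp_all add: idm_closed cmp_idm_left cmp_idm_right)
  then obtain \<phi>s where \<phi>s: "is_sigseq_mor C So Sm n (rotate_by n T) (rotate_by n S) \<phi>s"
      "\<phi>s ! 0 = idm C (So (fst S ! 0))" "\<phi>s ! 1 = idm C (So (fst S ! 1))"
    by blast
  let ?\<psi>s = "map (\<lambda>j. Sm_inv (fst T ! j) (fst S ! j) (\<phi>s ! j)) [0..<n]"
  have "?\<psi>s ! 0 = idm C (fst S ! 0)" "?\<psi>s ! 1 = idm C (fst S ! 1)"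
    using \<phi>s(2,3) T(2,3) n01 by (simp_all add: Sm_inv_idm)
  hence "is_weak_iso C So Sm n T S ?\<psi>s"
    using weak_iso_if_idm_start[OF sigseq_mor_desuspend[OF sT S \<phi>s(1)]] T(2,3) by simp
  thus ?thesis using N_weak_iso_closed N_exact[OF T(1)] exact_if_rotations_in_N[OF S rotations] T(1) by blast
qed

end

theorem theorem3p3:
  fixes C :: "('o, 'm) addcat"
    and So :: "'o \<Rightarrow> 'o" and Sm :: "'o \<Rightarrow> 'o \<Rightarrow> 'm \<Rightarrow> 'm"
    and n :: nat and N :: "('o, 'm) sigseq set"
  assumes "is_additive_category C"
    and "is_automorphism C So Sm"
    and "3 \<le> n"
    and "\<forall>S \<in> N. is_sigseq C So n S"
    and "N1_star C So Sm n N"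
    and "N3 C So Sm n N"
  shows "N2 C So Sm n N \<longleftrightarrow> N2_star C So Sm n N"
proof
  assume "N2 C So Sm n N"
  thus "N2_star C So Sm n N" using assms(4) unfolding N2_def N2_star_def by blast
next
  assume "N2_star C So Sm n N"
  then interpret rotation_closed_class C So Sm n N
    using assms by unfold_locales auto
  show "N2 C So Sm n N"
    unfolding N2_def using mem_N_if_left_rotation N_left_rotation by blast
qed

end
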